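(* Let $\{X_k\},\{V_k\},\{\mu_k\}$ be generated by the SMPG algorithm with $\bar\mu=0$. Then the index set $\mathbb{K}=\{k\in\mathbb{N}:\|V_k\|_{\mathrm F}\le\mu_k^2\}$ is infinite; consequently $\mu_k\downarrow 0$.
   Context: Setting. $1\le r<d$, $\mathcal{O}^{d,r}=\{X\in\mathbb{R}^{d\times r}:X^\top X=I_r\}$, $\mathcal{T}_X\mathcal{O}^{d,r}=\{D:X^\top D+D^\top X=0\}$. Consider $\min_{X\in\mathcal{O}^{d,r}}f(X)=u(X)+s(X)+w(X)$, where $u:\mathbb{R}^{d\times r}\to\mathbb{R}$ is continuously differentiable with $L_u$-Lipschitz gradient; $s:\mathbb{R}^{d\times r}\to\mathbb{R}$ is convex and $L_s$-Lipschitz; $w(X)=2\rho\|(I_d-XX^\top)\Sigma_\circ^{1/2}\|_{\mathrm F}$ with $\Sigma_\circ\in\mathbb{S}_+^d$, $\rho>0$. Smoothing: $\tilde w(X,\mu)=w(X)$ if $w(X)\ge\mu\rho$, $\tilde w(X,\mu)=\frac{w(X)^2}{2\mu\rho}+\frac{\mu\rho}{2}$ otherwise; $\tilde g(X,\mu)=u(X)+\tilde w(X,\mu)$, $\tilde f(X,\mu)=\tilde g(X,\mu)+s(X)$; $\nabla$ is the Euclidean gradient in $X$. A retraction is a smooth map $\mathfrak{R}$ on the tangent bundle of $\mathcal{O}^{d,r}$ with $\mathfrak{R}_X(0)=X$ and $\mathrm{D}\mathfrak{R}_X(0)=\mathrm{id}$ on $\mathcal{T}_X\mathcal{O}^{d,r}$.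 SMPG algorithm: inputs $X_0\in\mathcal{O}^{d,r}$, $\mu_0>0$, $\bar\mu\in[0,\mu_0]$, $\theta\in(0,1)$, $\beta\in(0,1)$. For $k=0,1,\dots$: compute $V_k=\arg\min_{V\in\mathcal{T}_{X_k}\mathcal{O}^{d,r}}\langle\nabla\tilde g(X_k,\mu_k),V\rangle+\frac{1}{2\mu_k}\|V\|_{\mathrm F}^2+s(X_k+V)$; if $\|V_k\|_{\mathrm F}\le\bar\mu^2$ and $\mu_k\le\bar\mu$, stop and return $X_k$; otherwise set $\alpha_k=\beta^{m_k}$ with $m_k$ the smallest nonnegative integer such that $\tilde f(\mathfrak{R}_{X_k}(\beta^{m_k}V_k),\mu_k)\le\tilde f(X_k,\mu_k)-\frac{\beta^{m_k}}{2\mu_k}\|V_k\|_{\mathrm F}^2$, set $X_{k+1}=\mathfrak{R}_{X_k}(\alpha_kV_k)$, and set $\mu_{k+1}=\mu_k$ if $\|V_k\|_{\mathrm F}>\mu_k^2$, $\mu_{k+1}=\theta\mu_k$ if $\|V_k\|_{\mathrm F}\le\mu_k^2$. (With $\bar\mu=0$ the algorithm never stops.) *)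

theory Defs
  imports "HOL-Analysis.Analysis"
begin

(* d x r real matrices are rendered as  real^'r^'d ; the norm / inner product of this
   type are exactly the Frobenius norm / Frobenius inner product. *)

definition stiefel :: "(real^'r^'d) set" where
  "stiefel = {X. transpose X ** X = mat 1}"

definition tangent_space :: "real^'r^'d \<Rightarrow> (real^'r^'d) set" where
  "tangent_space X = {D. transpose X ** D + transpose D ** X = 0}"

definition psd :: "real^'n^'n \<Rightarrow> bool" where
  "psd A \<longleftrightarrow> transpose A = A \<and> (\<forall>x. x \<bullet> (A *v x) \<ge> 0)"

fun Ck :: "nat \<Rightarrow> ('a::euclidean_space \<Rightarrow> 'b::real_normed_vector) \<Rightarrow> bool" where
  "Ck 0 f = continuous_on UNIV f"
| "Ck (Suc k) f = ((\<forall>x. f differentiable (at x)) \<and>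
                    (\<forall>v. Ck k (\<lambda>x. frechet_derivative f (at x) v)))"

definition smooth :: "('a::euclidean_space \<Rightarrow> 'b::real_normed_vector) \<Rightarrow> bool" where
  "smooth f \<longleftrightarrow> (\<forall>k. Ck k f)"

definition egrad :: "('a::real_inner \<Rightarrow> real) \<Rightarrow> 'a \<Rightarrow> 'a" where
  "egrad f X = (THE G. (f has_derivative (\<lambda>H. G \<bullet> H)) (at X))"

(* w(X) = 2 rho || (I - X X^T) S ||_F  with S = Sigma^(1/2) *)
definition wfun :: "real \<Rightarrow> real^'d^'d \<Rightarrow> real^'r^'d \<Rightarrow> real" where
  "wfun \<rho> S X = 2 * \<rho> * norm ((mat 1 - X ** transpose X) ** S)"

definition wsmooth :: "real \<Rightarrow> real^'d^'d \<Rightarrow> real^'r^'d \<Rightarrow> real \<Rightarrow> real" where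
  "wsmooth \<rho> S X \<mu> = (if wfun \<rho> S X \<ge> \<mu> * \<rho> then wfun \<rho> S X
                        else (wfun \<rho> S X)\<^sup>2 / (2 * \<mu> * \<rho>) + \<mu> * \<rho> / 2)"

definition is_retraction :: "(real^'r^'d \<Rightarrow> real^'r^'d \<Rightarrow> real^'r^'d) \<Rightarrow> bool" where
  "is_retraction R \<longleftrightarrow>
     smooth (\<lambda>p. R (fst p) (snd p)) \<and>
     (\<forall>X\<in>stiefel. \<forall>V\<in>tangent_space X. R X V \<in> stiefel) \<and>
     (\<forall>X\<in>stiefel. R X 0 = X) \<and>
     (\<forall>X\<in>stiefel. \<exists>D. (R X has_derivative D) (at 0) \<and> (\<forall>V\<in>tangent_space X. D V = V))"

end

theory Submission
  imports Defs
begin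

(* If only finitely many iterations satisfy ||V_k|| <= mu_k^2, then mu_k is eventually a constant
   c and ||V_k|| > c^2 from then on. For fixed c the smoothed objective is C^1, with a derivative
   that is bounded on the compact Stiefel manifold, so the proximal steps V_k stay bounded and
   decrease the model by at least (3/4) ||V_k||^2 / c. A first-order expansion along the retraction,
   uniform over the Stiefel manifold, then shows that all step sizes below some delta > 0 pass the
   Armijo test. Hence the backtracking step sizes stay bounded away from 0, and the objective would
   drop by a fixed amount at every iteration, which is impossible since it is bounded below on the
   compact Stiefel manifold. With infinitely many reductions mu_{k+1} = theta mu_k, the nonincreasing
   sequence mu_k tends to 0. *)

lemma transpose_add: "transpose (A + B) = transpose A + transpose (B::real^'n^'m)"
  by (simp add: transpose_def vec_eq_iff)

lemma matrix_add_rdistrib: "(A + B) ** C = A ** C + B ** (C::real^'p^'n)" for A :: "real^'n^'m"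
  by (vector matrix_matrix_mult_def sum.distrib algebra_simps)

lemma matrix_diff_rdistrib: "(A - B) ** C = A ** C - B ** (C::real^'p^'n)" for A :: "real^'n^'m"
  by (vector matrix_matrix_mult_def sum_subtractf algebra_simps)

lemma matrix_neg_left: "(- A) ** B = - (A ** (B::real^'p^'n))" for A :: "real^'n^'m"
  by (vector matrix_matrix_mult_def sum_negf)

lemma bounded_linear_transpose: "bounded_linear (transpose :: real^'n^'m \<Rightarrow> real^'m^'n)"
  by (intro linear_conv_bounded_linear[THEN iffD1] linearI) (simp_all add: transpose_add transpose_scalar)

lemma bounded_bilinear_matrix_matrix_mult:
  "bounded_bilinear (\<lambda>(A::real^'n^'m) (B::real^'p^'n). A ** B)"
  unfolding bilinear_conv_bounded_bilinear[symmetric] bilinear_def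
  by (auto intro!: linearI simp: matrix_add_ldistrib matrix_add_rdistrib matrix_scalar_ac scalar_matrix_assoc)

lemma has_derivative_matrix_mult[derivative_intros]:
  fixes f :: "'a::real_normed_vector \<Rightarrow> real^'n^'m" and g :: "'a \<Rightarrow> real^'p^'n"
  assumes "(f has_derivative f') (at x within A)" "(g has_derivative g') (at x within A)"
  shows "((\<lambda>x. f x ** g x) has_derivative (\<lambda>h. f x ** g' h + f' h ** g x)) (at x within A)"
  using bounded_bilinear.FDERIV[OF bounded_bilinear_matrix_matrix_mult assms] by simp

lemma has_derivative_transpose[derivative_intros]:
  fixes f :: "'a::real_normed_vector \<Rightarrow> real^'n^'m"
  assumes "(f has_derivative f') (at x within A)"
  shows "((\<lambda>x. transpose (f x)) has_derivative (\<lambda>h. transpose (f' h))) (at x within A)"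
  using bounded_linear.has_derivative[OF bounded_linear_transpose assms] .

lemma continuous_on_matrix_mult[continuous_intros]:
  fixes f :: "'a::topological_space \<Rightarrow> real^'n^'m" and g :: "'a \<Rightarrow> real^'p^'n"
  shows "continuous_on A f \<Longrightarrow> continuous_on A g \<Longrightarrow> continuous_on A (\<lambda>x. f x ** g x)"
  using bounded_bilinear.continuous_on[OF bounded_bilinear_matrix_matrix_mult] by blast

lemma continuous_on_transpose[continuous_intros]:
  fixes f :: "'a::topological_space \<Rightarrow> real^'n^'m"
  shows "continuous_on A f \<Longrightarrow> continuous_on A (\<lambda>x. transpose (f x))"
  using bounded_linear.continuous_on[OF bounded_linear_transpose] by blast

section \<open>The Stiefel manifold\<close>

lemma norm_sq_eq_trace:
  fixes X :: "real^'r^'d"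
  shows "(norm X)\<^sup>2 = (\<Sum>j\<in>UNIV. (transpose X ** X)$j$j)"
proof -
  have "(norm X)\<^sup>2 = (\<Sum>i\<in>UNIV. \<Sum>j\<in>UNIV. X$i$j * X$i$j)"
    by (simp add: power2_norm_eq_inner inner_vec_def)
  also have "\<dots> = (\<Sum>j\<in>UNIV. \<Sum>i\<in>UNIV. X$i$j * X$i$j)" by (rule sum.swap)
  finally show ?thesis by (simp add: matrix_matrix_mult_def transpose_def)
qed

lemma compact_stiefel: "compact (stiefel :: (real^'r^'d) set)"
proof -
  have "norm X \<le> real CARD('r) + 1" if "X \<in> stiefel" for X :: "real^'r^'d"
  proof -
    have "(norm X)\<^sup>2 = real CARD('r)"
      using that by (simp add: norm_sq_eq_trace stiefel_def mat_def)
    moreover have "0 \<le> (norm X - 1/2)\<^sup>2" by simp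
    ultimately show ?thesis by (simp add: power2_eq_square algebra_simps)
  qed
  hence "bounded (stiefel :: (real^'r^'d) set)" by (auto simp: bounded_iff)
  moreover have "closed (stiefel :: (real^'r^'d) set)"
    unfolding stiefel_def by (intro closed_Collect_eq continuous_intros)
  ultimately show ?thesis by (simp add: compact_eq_bounded_closed)
qed

lemma tangent_space_scaleR: "V \<in> tangent_space X \<Longrightarrow> a *\<^sub>R V \<in> tangent_space (X::real^'r^'d)"
  by (simp add: tangent_space_def matrix_scalar_ac transpose_scalar
      scalar_matrix_assoc[symmetric] scaleR_add_right[symmetric])

lemma zero_in_tangent_space: "0 \<in> tangent_space (X::real^'r^'d)"
  by (simp add: tangent_space_def transpose_def zero_vec_def[symmetric])

section \<open>The smoothed penalty\<close>

(* wsmooth as a function of z = ||(I - X X^T) S||^2 (see wsmooth_eq_smoothed_sqrt below);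
   unlike the norm, it is differentiable in z. *)
definition smoothed_sqrt :: "real \<Rightarrow> real \<Rightarrow> real \<Rightarrow> real" where
  "smoothed_sqrt c \<rho> z = (if z \<ge> c\<^sup>2/4 then 2*\<rho>* sqrt z else 2*\<rho>*z/c + c*\<rho>/2)"

definition smoothed_sqrt_deriv :: "real \<Rightarrow> real \<Rightarrow> real \<Rightarrow> real" where
  "smoothed_sqrt_deriv c \<rho> z = \<rho> / sqrt (max z (c\<^sup>2/4))"

lemma continuous_on_smoothed_sqrt_deriv[continuous_intros]:
  assumes "c > 0" "continuous_on A f"
  shows "continuous_on A (\<lambda>x. smoothed_sqrt_deriv c \<rho> (f x))"
proof -
  have "0 < c\<^sup>2/4" using assms(1) by simp
  hence "max (f x) (c\<^sup>2/4) > 0" for x by (simp add: less_max_iff_disj)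
  hence "sqrt (max (f x) (c\<^sup>2/4)) \<noteq> 0" for x by (metis real_sqrt_gt_zero less_irrefl)
  thus ?thesis
    unfolding smoothed_sqrt_deriv_def using assms(2) by (intro continuous_intros) auto
qed

lemma has_real_derivative_smoothed_sqrt:
  assumes c: "c > 0"
  shows "(smoothed_sqrt c \<rho> has_real_derivative smoothed_sqrt_deriv c \<rho> z) (at z)"
proof -
  define z0 where "z0 = c\<^sup>2/4"
  have z0: "z0 > 0" "sqrt z0 = c/2" using c by (simp_all add: z0_def real_sqrt_divide)
  let ?J = "closure {z0..} \<inter> closure {..<z0}"
  have "((\<lambda>z. if z \<in> {z0..} then 2*\<rho>* sqrt z else 2*\<rho>*z/c + c*\<rho>/2) has_derivative
      (if z \<in> {z0..} then (\<lambda>h. h * (\<rho> / sqrt z)) else (\<lambda>h. h * (2*\<rho>/c))))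
      (at z within {z0..} \<union> {..<z0})"
  proof (rule has_derivative_If_within_closures)
    show "((\<lambda>z. 2*\<rho>* sqrt z) has_derivative (\<lambda>h. h * (\<rho> / sqrt x))) (at x within {z0..} \<union> ?J)"
      if "x \<in> {z0..} \<union> ?J" for x
      using that z0 by (auto intro!: derivative_eq_intros simp: field_simps)
    show "((\<lambda>z. 2*\<rho>*z/c + c*\<rho>/2) has_derivative (\<lambda>h. h * (2*\<rho>/c))) (at x within {..<z0} \<union> ?J)"
      for x
      using c by (auto intro!: derivative_eq_intros)
    show "2*\<rho>* sqrt x = 2*\<rho>*x/c + c*\<rho>/2" "(\<lambda>h. h * (\<rho> / sqrt x)) = (\<lambda>h. h * (2*\<rho>/c))"
      if "x \<in> closure {z0..}" "x \<in> closure {..<z0}" for x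
    proof -
      have "x = z0" using that by simp
      moreover have "2*\<rho>*z0/c + c*\<rho>/2 = 2*\<rho>*(c/2)"
        using c by (simp add: z0_def power2_eq_square field_simps)
      ultimately show "2*\<rho>* sqrt x = 2*\<rho>*x/c + c*\<rho>/2" "(\<lambda>h. h * (\<rho> / sqrt x)) = (\<lambda>h. h * (2*\<rho>/c))"
        using c by (simp_all add: z0(2) fun_eq_iff)
    qed
  qed auto
  moreover have "smoothed_sqrt c \<rho> = (\<lambda>z. if z \<in> {z0..} then 2*\<rho>* sqrt z else 2*\<rho>*z/c + c*\<rho>/2)"
    by (auto simp: fun_eq_iff smoothed_sqrt_def z0_def)
  moreover have "(if z \<in> {z0..} then (\<lambda>h. h * (\<rho> / sqrt z)) else (\<lambda>h. h * (2*\<rho>/c)))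
      = (\<lambda>h. h * smoothed_sqrt_deriv c \<rho> z)"
    using z0 by (auto simp: smoothed_sqrt_deriv_def z0_def[symmetric] max_def)
  moreover have "{z0..} \<union> {..<z0} = UNIV" by auto
  ultimately show ?thesis by (simp add: has_field_derivative_def mult_commute_abs)
qed

definition residual :: "real^'d^'d \<Rightarrow> real^'r^'d \<Rightarrow> real^'d^'d" where
  "residual S Y = (mat 1 - Y ** transpose Y) ** S"

definition residual_deriv :: "real^'d^'d \<Rightarrow> real^'r^'d \<Rightarrow> real^'r^'d \<Rightarrow> real^'d^'d" where
  "residual_deriv S Y H = - ((Y ** transpose H + H ** transpose Y) ** S)"

lemma has_derivative_residual: "(residual S has_derivative residual_deriv S Y) (at Y)"
proof -
  have "((\<lambda>Y. (mat 1 - Y ** transpose Y) ** S) has_derivative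
     (\<lambda>h. (mat 1 - Y ** transpose Y) ** 0 + (0 - (Y ** transpose h + h ** transpose Y)) ** S)) (at Y)"
    by (intro derivative_intros)
  thus ?thesis
    by (simp add: residual_def[abs_def] residual_deriv_def[abs_def] matrix_diff_rdistrib
        matrix_add_rdistrib matrix_neg_left)
qed

lemma wsmooth_eq_smoothed_sqrt:
  assumes "c > 0" "\<rho> > 0"
  shows "wsmooth \<rho> S Y c = smoothed_sqrt c \<rho> (residual S Y \<bullet> residual S Y)"
proof -
  let ?n = "norm (residual S Y)"
  have "2*\<rho>*?n \<ge> c*\<rho> \<longleftrightarrow> ?n \<ge> c/2" using assms by (auto simp: field_simps)
  also have "\<dots> \<longleftrightarrow> (c/2)\<^sup>2 \<le> ?n\<^sup>2"
    using assms by (intro iffI power_mono) (auto intro: power2_le_imp_le)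
  also have "\<dots> \<longleftrightarrow> ?n\<^sup>2 \<ge> c\<^sup>2/4" by (simp add: power_divide)
  finally show ?thesis
    unfolding wsmooth_def smoothed_sqrt_def wfun_def residual_def[symmetric] power2_norm_eq_inner[symmetric]
    using assms by (auto simp: field_simps power2_eq_square)
qed

definition smooth_part_deriv ::
    "(real^'r^'d \<Rightarrow> real^'r^'d) \<Rightarrow> real \<Rightarrow> real^'d^'d \<Rightarrow> real \<Rightarrow> real^'r^'d \<Rightarrow> real^'r^'d \<Rightarrow> real" where
  "smooth_part_deriv gu \<rho> S c Y H = gu Y \<bullet> H
     + smoothed_sqrt_deriv c \<rho> (residual S Y \<bullet> residual S Y) * (2 * (residual S Y \<bullet> residual_deriv S Y H))"

lemma has_derivative_smooth_part:
  assumes c: "c > 0" and rho: "\<rho> > 0"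
    and u_grad: "(u has_derivative (\<lambda>H. gu Y \<bullet> H)) (at Y)"
  shows "((\<lambda>Y. u Y + wsmooth \<rho> S Y c) has_derivative smooth_part_deriv gu \<rho> S c Y) (at Y)"
proof -
  have "((\<lambda>Y. residual S Y \<bullet> residual S Y) has_derivative
      (\<lambda>H. 2 * (residual S Y \<bullet> residual_deriv S Y H))) (at Y)"
    by (rule has_derivative_eq_rhs[OF has_derivative_inner[OF has_derivative_residual has_derivative_residual]])
      (simp add: fun_eq_iff inner_commute)
  from diff_chain_at[OF this has_real_derivative_smoothed_sqrt[OF c, unfolded has_field_derivative_def]]
  have "((\<lambda>Y. smoothed_sqrt c \<rho> (residual S Y \<bullet> residual S Y)) has_derivative
      (\<lambda>H. smoothed_sqrt_deriv c \<rho> (residual S Y \<bullet> residual S Y)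
        * (2 * (residual S Y \<bullet> residual_deriv S Y H)))) (at Y)"
    by (simp add: o_def mult.commute)
  thus ?thesis
    unfolding smooth_part_deriv_def[abs_def] wsmooth_eq_smoothed_sqrt[OF c rho]
    by (intro has_derivative_add u_grad)
qed

lemma continuous_on_smooth_part_deriv:
  assumes "c > 0" "continuous_on UNIV gu"
  shows "continuous_on UNIV (\<lambda>p. smooth_part_deriv gu \<rho> S c (fst p) (snd p))"
proof -
  have "continuous_on UNIV (\<lambda>p. gu (fst p))"
    by (rule continuous_on_compose2[OF assms(2) continuous_on_fst]) auto
  thus ?thesis
    unfolding smooth_part_deriv_def residual_def residual_deriv_def
    by (intro continuous_intros) (use assms(1) in auto)
qed

lemma continuous_on_Lipschitz_bound:
  fixes f :: "'a::real_normed_vector \<Rightarrow> 'b::real_normed_vector"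
  assumes "\<And>x y. norm (f x - f y) \<le> L * norm (x - y)"
  shows "continuous_on UNIV f"
proof -
  have "(max L 0)-lipschitz_on UNIV f"
  proof (rule lipschitz_onI)
    fix x y :: 'a
    have "L * norm (x - y) \<le> max L 0 * norm (x - y)" by (intro mult_right_mono) auto
    thus "dist (f x) (f y) \<le> max L 0 * dist x y" using assms[of x y] by (simp add: dist_norm)
  qed simp
  thus ?thesis by (rule lipschitz_on_continuous_on)
qed

lemma egrad_inner:
  fixes f :: "'a::euclidean_space \<Rightarrow> real"
  assumes d: "(f has_derivative D) (at X)"
  shows "egrad f X \<bullet> H = D H"
proof -
  have lin: "linear D" using d by (rule has_derivative_linear)
  define G where "G = (\<Sum>b\<in>Basis. D b *\<^sub>R b)"
  have G: "(\<lambda>H. G \<bullet> H) = D"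
  proof
    fix H
    have "D H = D (\<Sum>b\<in>Basis. (H \<bullet> b) *\<^sub>R b)" by (simp add: euclidean_representation)
    also have "\<dots> = G \<bullet> H"
      by (simp add: G_def inner_sum_right linear_sum[OF lin] linear_scale[OF lin] inner_commute mult.commute)
    finally show "G \<bullet> H = D H" by simp
  qed
  have "egrad f X = G"
    unfolding egrad_def
  proof (rule the_equality)
    show "(f has_derivative (\<lambda>H. G \<bullet> H)) (at X)" using d G by simp
  next
    fix G' assume "(f has_derivative (\<lambda>H. G' \<bullet> H)) (at X)"
    hence "(\<lambda>H. G' \<bullet> H) = D" using d by (rule has_derivative_unique)
    hence "\<forall>H. G' \<bullet> H = G \<bullet> H" using G by metis
    hence "(G' - G) \<bullet> (G' - G) = 0" by (simp add: inner_diff_left)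
    thus "G' = G" by simp
  qed
  thus ?thesis using G by auto
qed

lemma continuous_on_linear_family:
  fixes D :: "'a::topological_space \<Rightarrow> 'b::euclidean_space \<Rightarrow> 'c::real_normed_vector"
  assumes lin: "\<And>x. linear (D x)" and cont: "\<And>v. continuous_on UNIV (\<lambda>x. D x v)"
  shows "continuous_on UNIV (\<lambda>p. D (fst p) (snd p))"
proof -
  have rep: "D x v = (\<Sum>b\<in>Basis. (v \<bullet> b) *\<^sub>R D x b)" for x v
  proof -
    have "D x v = D x (\<Sum>b\<in>Basis. (v \<bullet> b) *\<^sub>R b)" by (simp add: euclidean_representation)
    thus ?thesis by (simp add: linear_sum[OF lin] linear_scale[OF lin])
  qed
  have "(\<lambda>p. D (fst p) (snd p)) = (\<lambda>p. \<Sum>b\<in>Basis. (snd p \<bullet> b) *\<^sub>R D (fst p) b)"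
    by (intro ext rep)
  moreover have "continuous_on UNIV (\<lambda>p. D (fst p) b)" for b
    by (rule continuous_on_compose2[OF cont continuous_on_fst]) auto
  ultimately show ?thesis by (simp only:) (intro continuous_intros)
qed

lemma linear_family_bounded_on_compact:
  fixes D :: "'a::topological_space \<Rightarrow> 'b::euclidean_space \<Rightarrow> 'c::real_normed_vector"
  assumes lin: "\<And>x. linear (D x)" and cont: "continuous_on UNIV (\<lambda>p. D (fst p) (snd p))"
    and K: "compact K"
  shows "\<exists>M. \<forall>x\<in>K. \<forall>v. norm (D x v) \<le> M * norm v"
proof -
  have "compact ((\<lambda>p. D (fst p) (snd p)) ` (K \<times> cball 0 1))"
    by (intro compact_continuous_image continuous_on_subset[OF cont] compact_Times K compact_cball) simp
  then obtain M where "\<forall>y \<in> (\<lambda>p. D (fst p) (snd p)) ` (K \<times> cball 0 1). norm y \<le> M"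
    by (metis compact_imp_bounded bounded_iff)
  hence M: "\<And>x w. x \<in> K \<Longrightarrow> norm w \<le> 1 \<Longrightarrow> norm (D x w) \<le> M" by force
  have "norm (D x v) \<le> M * norm v" if "x \<in> K" for x v
  proof (cases "v = 0")
    case True thus ?thesis using linear_0[OF lin] by simp
  next
    case False
    have "D x v = norm v *\<^sub>R D x (v /\<^sub>R norm v)"
      using False by (simp add: linear_scale[OF lin, symmetric])
    thus ?thesis using M[OF that, of "v /\<^sub>R norm v"] False by (simp add: mult.commute)
  qed
  thus ?thesis by blast
qed

lemma uniform_linearization_on_compact:
  fixes F F' :: "'a::metric_space \<Rightarrow> 'v::euclidean_space \<Rightarrow> real \<Rightarrow> 'b::real_normed_vector"
  assumes K: "compact K" and e: "\<epsilon> > 0"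
    and deriv: "\<And>X V \<tau>. (F X V has_vector_derivative F' X V \<tau>) (at \<tau>)"
    and cont: "continuous_on UNIV (\<lambda>(X, V, \<tau>). F' X V \<tau>)"
  shows "\<exists>\<delta>>0. \<forall>X\<in>K. \<forall>V. norm V \<le> B \<longrightarrow>
           (\<forall>t. 0 \<le> t \<and> t \<le> \<delta> \<longrightarrow> norm (F X V t - F X V 0 - t *\<^sub>R F' X V 0) \<le> t * \<epsilon>)"
proof -
  define C where "C = K \<times> cball (0::'v) B \<times> {0..1::real}"
  define G where "G = (\<lambda>(X, V, \<tau>). F' X V \<tau>)"
  have "uniformly_continuous_on C G"
    unfolding C_def G_def
    by (intro compact_uniformly_continuous continuous_on_subset[OF cont] compact_Times K
        compact_cball compact_Icc) simp
  then obtain d where d: "d > 0" and dd: "\<forall>p\<in>C. \<forall>p'\<in>C. dist p' p < d \<longrightarrow> dist (G p') (G p) < \<epsilon>"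
    using e unfolding uniformly_continuous_on_def by blast
  have "norm (F X V t - F X V 0 - t *\<^sub>R F' X V 0) \<le> t * \<epsilon>"
    if X: "X \<in> K" and V: "norm V \<le> B" and t: "0 \<le> t" "t \<le> min (d/2) 1" for X V t
  proof -
    have "norm (F X V t - F X V 0 - (t - 0) *\<^sub>R F' X V 0) \<le> norm (t - 0) * \<epsilon>"
    proof (rule vector_differentiable_bound_linearization[where S="{0..t}"])
      show "norm (F' X V \<tau> - F' X V 0) \<le> \<epsilon>" if "\<tau> \<in> {0..t}" for \<tau>
      proof -
        have "(X, V, 0) \<in> C" "(X, V, \<tau>) \<in> C" using X V t that by (auto simp: C_def)
        moreover have "dist (X, V, \<tau>) (X, V, 0) < d" using t that d by (simp add: dist_Pair_Pair)
        ultimately have "dist (G (X, V, \<tau>)) (G (X, V, 0)) < \<epsilon>" using dd by blast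
        thus ?thesis by (simp add: G_def dist_norm)
      qed
    qed (use deriv t in \<open>auto intro: has_vector_derivative_at_within simp: closed_segment_eq_real_ivl\<close>)
    thus ?thesis using t by simp
  qed
  moreover have "min (d/2) 1 > 0" using d by simp
  ultimately show ?thesis by blast
qed

section \<open>Retractions\<close>

definition retraction_velocity ::
    "(real^'r^'d \<Rightarrow> real^'r^'d \<Rightarrow> real^'r^'d) \<Rightarrow> real^'r^'d \<Rightarrow> real^'r^'d \<Rightarrow> real \<Rightarrow> real^'r^'d" where
  "retraction_velocity R X V \<tau> = frechet_derivative (\<lambda>p. R (fst p) (snd p)) (at (X, \<tau> *\<^sub>R V)) (0, V)"

context
  fixes R :: "real^'r^'d \<Rightarrow> real^'r^'d \<Rightarrow> real^'r^'d"
  assumes retr: "is_retraction R"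
begin

lemma retraction_has_derivative:
  "((\<lambda>p. R (fst p) (snd p)) has_derivative frechet_derivative (\<lambda>p. R (fst p) (snd p)) (at p)) (at p)"
proof -
  have "Ck 1 (\<lambda>p. R (fst p) (snd p))" using retr by (simp add: is_retraction_def smooth_def)
  hence "(\<lambda>p. R (fst p) (snd p)) differentiable (at p)" by (cases p) simp
  thus ?thesis by (simp add: frechet_derivative_works[symmetric])
qed

lemma continuous_on_retraction: "continuous_on UNIV (\<lambda>p. R (fst p) (snd p))"
  using retraction_has_derivative by (meson continuous_at_imp_continuous_on has_derivative_continuous)

lemma continuous_on_retraction_velocity:
  "continuous_on UNIV (\<lambda>(X, V, \<tau>). retraction_velocity R X V \<tau>)"
proof -
  have "Ck 1 (\<lambda>p. R (fst p) (snd p))" using retr by (simp add: is_retraction_def smooth_def)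
  hence "continuous_on UNIV (\<lambda>x. frechet_derivative (\<lambda>p. R (fst p) (snd p)) (at x) v)" for v
    by (cases v) simp
  hence J: "continuous_on UNIV (\<lambda>q. frechet_derivative (\<lambda>p. R (fst p) (snd p)) (at (fst q)) (snd q))"
    by (intro continuous_on_linear_family has_derivative_linear[OF retraction_has_derivative])
  have "continuous_on UNIV ((\<lambda>q. frechet_derivative (\<lambda>p. R (fst p) (snd p)) (at (fst q)) (snd q))
      \<circ> (\<lambda>(X, V, \<tau>). ((X, \<tau> *\<^sub>R V), (0, V))))"
    by (rule continuous_on_compose[OF _ continuous_on_subset[OF J subset_UNIV]])
      (auto intro!: continuous_intros simp: case_prod_unfold)
  thus ?thesis by (simp add: o_def retraction_velocity_def case_prod_unfold)
qed

lemma retraction_curve_has_vector_derivative: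
  "((\<lambda>\<tau>. R X (\<tau> *\<^sub>R V)) has_vector_derivative retraction_velocity R X V \<tau>) (at \<tau>)"
proof -
  let ?J = "frechet_derivative (\<lambda>p. R (fst p) (snd p)) (at (X, \<tau> *\<^sub>R V))"
  have "((\<lambda>\<tau>. (X, \<tau> *\<^sub>R V)) has_derivative (\<lambda>h. (0, h *\<^sub>R V))) (at \<tau>)"
    by (auto intro!: derivative_eq_intros)
  from diff_chain_at[OF this retraction_has_derivative]
  have "((\<lambda>\<tau>. R X (\<tau> *\<^sub>R V)) has_derivative (\<lambda>h. ?J (h *\<^sub>R (0, V)))) (at \<tau>)"
    by (simp add: o_def)
  thus ?thesis
    unfolding has_vector_derivative_def retraction_velocity_def
      linear_scale[OF has_derivative_linear[OF retraction_has_derivative]] .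
qed

lemma retraction_iterates_in_stiefel:
  assumes "X 0 \<in> stiefel" and "\<And>k. V k \<in> tangent_space (X k)"
    and "\<And>k. X (Suc k) = R (X k) (a k *\<^sub>R V k)"
  shows "X k \<in> stiefel"
proof (induction k)
  case (Suc k)
  thus ?case using retr tangent_space_scaleR[OF assms(2)] by (simp add: assms(3) is_retraction_def)
qed (rule assms(1))

lemma retraction_velocity_zero:
  assumes X: "X \<in> stiefel" and V: "V \<in> tangent_space X"
  shows "retraction_velocity R X V 0 = V"
proof -
  obtain D where D: "(R X has_derivative D) (at 0)" and DV: "\<forall>V\<in>tangent_space X. D V = V"
    using retr X by (auto simp: is_retraction_def)
  have "((\<lambda>V. (X, V)) has_derivative (\<lambda>h. (0, h))) (at (0::real^'r^'d))"
    by (auto intro!: derivative_eq_intros)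
  from diff_chain_at[OF this retraction_has_derivative]
  have "(R X has_derivative (\<lambda>h. retraction_velocity R X h 0)) (at 0)"
    by (simp add: o_def retraction_velocity_def)
  with D have "D = (\<lambda>h. retraction_velocity R X h 0)" by (rule has_derivative_unique)
  thus ?thesis using DV V by metis
qed

end

section \<open>Proximal steps and the parameter schedule\<close>

lemma prox_step_norm_le:
  fixes \<phi> s :: "'a::real_normed_vector \<Rightarrow> real"
  assumes c: "c > 0" and M: "0 \<le> M" and L: "0 \<le> L"
    and opt: "\<phi> V + 1/(2*c) * (norm V)\<^sup>2 + s (X + V) \<le> s X"
    and bound: "\<bar>\<phi> V\<bar> \<le> M * norm V" and s_lip: "s X - s (X + V) \<le> L * norm V"
  shows "norm V \<le> 2*c*(M + L)"
proof (cases "V = 0")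
  case True thus ?thesis using c M L by simp
next
  case False
  have "1/(2*c) * norm V * norm V \<le> (M + L) * norm V"
    using opt bound s_lip by (simp add: power2_eq_square algebra_simps abs_le_iff)
  hence "1/(2*c) * norm V \<le> M + L" by (rule mult_right_le_imp_le) (use False in simp)
  thus ?thesis using c by (simp add: field_simps)
qed

lemma prox_step_model_decrease:
  fixes \<phi> s :: "'a::real_normed_vector \<Rightarrow> real"
  assumes c: "c > 0" and lin: "linear \<phi>" and conv: "convex_on UNIV s"
    and opt: "\<phi> V + 1/(2*c) * (norm V)\<^sup>2 + s (X + V)
      \<le> \<phi> ((1/2) *\<^sub>R V) + 1/(2*c) * (norm ((1/2) *\<^sub>R V))\<^sup>2 + s (X + (1/2) *\<^sub>R V)"
  shows "\<phi> V + s (X + V) - s X \<le> -(3/4) * ((norm V)\<^sup>2 / c)"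
proof -
  have "s ((1/2) *\<^sub>R X + (1/2) *\<^sub>R (X + V)) \<le> (1/2) * s X + (1/2) * s (X + V)"
    using convex_onD[OF conv, of "1/2"] by simp
  moreover have "(1/2) *\<^sub>R X + (1/2) *\<^sub>R (X + V) = X + (1/2) *\<^sub>R V"
  proof -
    have "(1/2) *\<^sub>R X + (1/2) *\<^sub>R (X + V) = ((1/2) + (1/2)) *\<^sub>R X + (1/2) *\<^sub>R V"
      by (simp only: scaleR_add_left scaleR_add_right add.assoc)
    thus ?thesis by simp
  qed
  moreover have "\<phi> ((1/2) *\<^sub>R V) = \<phi> V / 2" using linear_scale[OF lin] by simp
  moreover have "1/(2*c) * (norm ((1/2) *\<^sub>R V))\<^sup>2 = (1/8) * ((norm V)\<^sup>2 / c)"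
    by (simp add: power2_eq_square)
  moreover have "1/(2*c) * (norm V)\<^sup>2 = (1/2) * ((norm V)\<^sup>2 / c)" by simp
  ultimately show ?thesis using opt by simp
qed

lemma bounded_below_no_uniform_decrease:
  fixes F :: "nat \<Rightarrow> real"
  assumes d: "d > 0" and L: "\<And>k. L \<le> F k"
  shows "\<exists>k\<ge>N. F k - d < F (Suc k)"
proof (rule ccontr)
  assume "\<not> ?thesis"
  hence step: "F (Suc k) \<le> F k - d" if "k \<ge> N" for k using that by (simp add: not_less)
  have iter: "F (N + j) \<le> F N - real j * d" for j
  proof (induction j)
    case (Suc j)
    thus ?case using step[of "N + j"] by (simp add: algebra_simps)
  qed simp
  obtain j :: nat where "real j > (F N - L) / d" using reals_Archimedean2 by blast
  hence "real j * d > F N - L" using d by (simp add: field_simps)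
  thus False using iter[of j] L[of "N + j"] by simp
qed

context
  fixes \<mu> :: "nat \<Rightarrow> real" and \<theta> :: real and P :: "nat \<Rightarrow> bool"
  assumes mu_next: "\<And>k. \<mu> (Suc k) = (if P k then \<mu> k else \<theta> * \<mu> k)"
begin

lemma reduction_schedule_pos: "\<mu> 0 > 0 \<Longrightarrow> \<theta> > 0 \<Longrightarrow> \<mu> k > 0"
  by (induction k) (auto simp: mu_next)

lemma reduction_schedule_eventually_const:
  assumes "finite {k. \<not> P k}"
  obtains N where "\<And>k. k \<ge> N \<Longrightarrow> \<mu> k = \<mu> N \<and> P k"
proof -
  obtain N where "{k. \<not> P k} \<subseteq> {..<N}" using finite_nat_bounded[OF assms] by blast
  hence N: "\<And>k. k \<ge> N \<Longrightarrow> P k" by fastforce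
  have "\<mu> k = \<mu> N" if "k \<ge> N" for k
    using that by (induction k rule: dec_induct) (simp_all add: mu_next N)
  thus ?thesis using N that by blast
qed

lemma reduction_schedule_tendsto_zero:
  assumes pos: "\<And>k. \<mu> k > 0" and theta: "\<theta> < 1" and inf: "infinite {k. \<not> P k}"
  shows "decseq \<mu> \<and> \<mu> \<longlonglongrightarrow> 0"
proof -
  have dec: "decseq \<mu>"
    by (rule decseq_SucI) (use pos theta in \<open>auto simp: mu_next less_imp_le\<close>)
  have "\<forall>i. 0 \<le> \<mu> i" using pos less_imp_le by blast
  then obtain L where L: "\<mu> \<longlonglongrightarrow> L" using decseq_convergent[OF dec] by blast
  have "L \<ge> 0" using pos by (intro LIMSEQ_le_const[OF L]) (auto intro: less_imp_le)
  moreover have "L \<le> 0"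
  proof (rule ccontr)
    assume "\<not> L \<le> 0"
    hence gap: "0 < L - \<theta> * L" using theta by simp
    have "(\<lambda>k. \<mu> (Suc k) - \<theta> * \<mu> k) \<longlonglongrightarrow> L - \<theta> * L"
      by (intro tendsto_intros LIMSEQ_Suc L)
    from order_tendstoD(1)[OF this gap]
    obtain N where N: "\<And>k. k \<ge> N \<Longrightarrow> 0 < \<mu> (Suc k) - \<theta> * \<mu> k"
      by (auto simp: eventually_sequentially)
    have "P k" if "k \<ge> N" for k using N[OF that] mu_next[of k] by (auto split: if_splits)
    hence "{k. \<not> P k} \<subseteq> {..<N}" by (auto simp: not_less[symmetric])
    thus False using inf finite_subset by blast
  qed
  ultimately show ?thesis using dec L by simp
qed

end

section \<open>The smoothed problem\<close>

locale smpg_problem =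
  fixes u s :: "real^'r^'d \<Rightarrow> real" and gu :: "real^'r^'d \<Rightarrow> real^'r^'d"
    and Ls \<rho> :: real and S :: "real^'d^'d" and R :: "real^'r^'d \<Rightarrow> real^'r^'d \<Rightarrow> real^'r^'d"
  assumes u_grad: "\<And>Y. (u has_derivative (\<lambda>H. gu Y \<bullet> H)) (at Y)"
    and gu_cont: "continuous_on UNIV gu"
    and s_convex: "convex_on UNIV s"
    and s_lip: "\<And>Y Z. \<bar>s Y - s Z\<bar> \<le> Ls * norm (Y - Z)"
    and rho_pos: "\<rho> > 0"
    and retr: "is_retraction R"
begin

abbreviation smooth_part :: "real \<Rightarrow> real^'r^'d \<Rightarrow> real" where
  "smooth_part c Y \<equiv> u Y + wsmooth \<rho> S Y c"

abbreviation objective :: "real \<Rightarrow> real^'r^'d \<Rightarrow> real" where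
  "objective c Y \<equiv> smooth_part c Y + s Y"

abbreviation dg :: "real \<Rightarrow> real^'r^'d \<Rightarrow> real^'r^'d \<Rightarrow> real" where
  "dg c \<equiv> smooth_part_deriv gu \<rho> S c"

lemma smooth_part_has_derivative: "c > 0 \<Longrightarrow> (smooth_part c has_derivative dg c Y) (at Y)"
  using has_derivative_smooth_part[where gu=gu, OF _ rho_pos u_grad] .

lemma linear_dg: "c > 0 \<Longrightarrow> linear (dg c Y)"
  using smooth_part_has_derivative by (rule has_derivative_linear)

lemma egrad_smooth_part: "c > 0 \<Longrightarrow> egrad (smooth_part c) Y \<bullet> W = dg c Y W"
  using smooth_part_has_derivative by (rule egrad_inner)

lemma continuous_on_s: "continuous_on UNIV s"
  using s_lip by (intro continuous_on_Lipschitz_bound) (simp add: real_norm_def)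

lemma objective_bounded_below:
  assumes c: "c > 0"
  obtains L where "\<And>Y. Y \<in> stiefel \<Longrightarrow> L \<le> objective c Y"
proof -
  have "continuous_on UNIV u"
    using u_grad by (meson continuous_at_imp_continuous_on has_derivative_continuous)
  hence "continuous_on stiefel (\<lambda>Y. u Y + s Y)"
    using continuous_on_s by (intro continuous_on_add) (auto intro: continuous_on_subset)
  hence "bounded ((\<lambda>Y. u Y + s Y) ` stiefel)"
    by (intro compact_imp_bounded compact_continuous_image compact_stiefel)
  then obtain b where "\<forall>y\<in>(\<lambda>Y. u Y + s Y) ` stiefel. norm y \<le> b" by (auto simp: bounded_iff)
  hence b: "\<And>Y. Y \<in> stiefel \<Longrightarrow> \<bar>u Y + s Y\<bar> \<le> b" by auto
  have "- b \<le> objective c Y" if "Y \<in> stiefel" for Y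
  proof -
    have "wsmooth \<rho> S Y c \<ge> 0" using c rho_pos by (auto simp: wsmooth_def wfun_def)
    thus ?thesis using b[OF that] by (simp add: abs_le_iff)
  qed
  thus ?thesis using that by blast
qed

lemma dg_bounded:
  assumes c: "c > 0"
  obtains M where "0 \<le> M" "\<And>Y W. Y \<in> stiefel \<Longrightarrow> \<bar>dg c Y W\<bar> \<le> M * norm W"
proof -
  obtain M where "\<forall>Y\<in>stiefel. \<forall>W. norm (dg c Y W) \<le> M * norm W"
    using linear_family_bounded_on_compact[OF linear_dg[OF c]
        continuous_on_smooth_part_deriv[OF c gu_cont] compact_stiefel] by blast
  hence "\<bar>dg c Y W\<bar> \<le> max M 0 * norm W" if "Y \<in> stiefel" for Y W
    using that by (force intro: order_trans mult_right_mono)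
  thus ?thesis using that[of "max M 0"] by simp
qed

lemma smooth_part_along_retraction:
  assumes c: "c > 0"
  shows "((\<lambda>\<tau>. smooth_part c (R X (\<tau> *\<^sub>R V))) has_vector_derivative
           dg c (R X (\<tau> *\<^sub>R V)) (retraction_velocity R X V \<tau>)) (at \<tau>)"
proof -
  have "((\<lambda>\<tau>. smooth_part c (R X (\<tau> *\<^sub>R V))) has_derivative
      (\<lambda>h. dg c (R X (\<tau> *\<^sub>R V)) (h *\<^sub>R retraction_velocity R X V \<tau>))) (at \<tau>)"
    using diff_chain_at[OF retraction_curve_has_vector_derivative[OF retr, unfolded has_vector_derivative_def]
        smooth_part_has_derivative[OF c]]
    by (simp add: o_def)
  thus ?thesis
    unfolding has_vector_derivative_def linear_scale[OF linear_dg[OF c]] .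
qed

lemma continuous_on_dg_along_retraction:
  assumes c: "c > 0"
  shows "continuous_on UNIV (\<lambda>(X, V, \<tau>). dg c (R X (\<tau> *\<^sub>R V)) (retraction_velocity R X V \<tau>))"
proof -
  have "continuous_on UNIV ((\<lambda>p. R (fst p) (snd p)) \<circ> (\<lambda>(X, V, \<tau>). (X, \<tau> *\<^sub>R V)))"
    by (rule continuous_on_compose[OF _ continuous_on_subset[OF continuous_on_retraction[OF retr] subset_UNIV]])
      (auto intro!: continuous_intros simp: case_prod_unfold)
  hence "continuous_on UNIV (\<lambda>p. R (fst p) (snd (snd p) *\<^sub>R fst (snd p)))"
    by (simp add: o_def case_prod_unfold)
  hence "continuous_on UNIV (\<lambda>(X, V, \<tau>). (R X (\<tau> *\<^sub>R V), retraction_velocity R X V \<tau>))"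
    unfolding case_prod_unfold
    by (rule continuous_on_Pair[OF _ continuous_on_retraction_velocity[OF retr, unfolded case_prod_unfold]])
  hence "continuous_on UNIV ((\<lambda>p. dg c (fst p) (snd p))
      \<circ> (\<lambda>(X, V, \<tau>). (R X (\<tau> *\<^sub>R V), retraction_velocity R X V \<tau>)))"
    by (rule continuous_on_compose[OF _ continuous_on_subset[OF continuous_on_smooth_part_deriv[OF c gu_cont]
          subset_UNIV]])
  thus ?thesis by (simp add: o_def case_prod_unfold)
qed

lemma objective_first_order_bound:
  assumes c: "c > 0" and \<kappa>: "\<kappa> > 0"
  obtains \<delta> where "0 < \<delta>" "\<delta> \<le> 1"
    "\<And>X V t. X \<in> stiefel \<Longrightarrow> V \<in> tangent_space X \<Longrightarrow> norm V \<le> B \<Longrightarrow> 0 \<le> t \<Longrightarrow> t \<le> \<delta> \<Longrightarrow>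
       objective c (R X (t *\<^sub>R V)) \<le> objective c X + t * (dg c X V + s (X + V) - s X) + t * \<kappa>"
proof -
  define \<epsilon> where "\<epsilon> = \<kappa> / (1 + \<bar>Ls\<bar>)"
  have "1 + \<bar>Ls\<bar> > 0" by (simp add: add_pos_nonneg)
  hence \<epsilon>: "\<epsilon> > 0" "\<epsilon> + \<bar>Ls\<bar> * \<epsilon> = \<kappa>"
    using \<kappa> by (simp_all add: \<epsilon>_def divide_simps) (simp add: algebra_simps)
  obtain \<delta>1 where "\<delta>1 > 0" and R_lin: "\<forall>X\<in>stiefel. \<forall>V. norm V \<le> B \<longrightarrow> (\<forall>t. 0 \<le> t \<and> t \<le> \<delta>1 \<longrightarrow>
      norm (R X (t *\<^sub>R V) - R X 0 - t *\<^sub>R retraction_velocity R X V 0) \<le> t * \<epsilon>)"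
    using uniform_linearization_on_compact[where B=B, OF compact_stiefel \<epsilon>(1)
        retraction_curve_has_vector_derivative[OF retr] continuous_on_retraction_velocity[OF retr]]
    by auto
  obtain \<delta>2 where "\<delta>2 > 0" and g_lin: "\<forall>X\<in>stiefel. \<forall>V. norm V \<le> B \<longrightarrow> (\<forall>t. 0 \<le> t \<and> t \<le> \<delta>2 \<longrightarrow>
      \<bar>smooth_part c (R X (t *\<^sub>R V)) - smooth_part c (R X 0)
        - t * dg c (R X 0) (retraction_velocity R X V 0)\<bar> \<le> t * \<epsilon>)"
    using uniform_linearization_on_compact[where B=B, OF compact_stiefel \<epsilon>(1)
        smooth_part_along_retraction[OF c] continuous_on_dg_along_retraction[OF c]]
    by auto
  have "objective c (R X (t *\<^sub>R V)) \<le> objective c X + t * (dg c X V + s (X + V) - s X) + t * \<kappa>"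
    if X: "X \<in> stiefel" and V: "V \<in> tangent_space X" "norm V \<le> B"
      and t: "0 \<le> t" "t \<le> min (min \<delta>1 \<delta>2) 1" for X V t
  proof -
    have R0: "R X 0 = X" and vel0: "retraction_velocity R X V 0 = V"
      using retr X retraction_velocity_zero[OF retr X V(1)] by (auto simp: is_retraction_def)
    have "norm (R X (t *\<^sub>R V) - R X 0 - t *\<^sub>R retraction_velocity R X V 0) \<le> t * \<epsilon>"
      using R_lin X V t by simp
    hence "norm (R X (t *\<^sub>R V) - (X + t *\<^sub>R V)) \<le> t * \<epsilon>"
      unfolding R0 vel0 by (simp add: diff_diff_eq)
    hence "\<bar>Ls\<bar> * norm (R X (t *\<^sub>R V) - (X + t *\<^sub>R V)) \<le> \<bar>Ls\<bar> * (t * \<epsilon>)"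
      by (rule mult_left_mono) simp
    moreover have "s (R X (t *\<^sub>R V)) - s (X + t *\<^sub>R V) \<le> \<bar>Ls\<bar> * norm (R X (t *\<^sub>R V) - (X + t *\<^sub>R V))"
    proof -
      have "Ls * norm (R X (t *\<^sub>R V) - (X + t *\<^sub>R V)) \<le> \<bar>Ls\<bar> * norm (R X (t *\<^sub>R V) - (X + t *\<^sub>R V))"
        by (intro mult_right_mono) auto
      thus ?thesis using s_lip[of "R X (t *\<^sub>R V)" "X + t *\<^sub>R V"] by (simp add: abs_le_iff)
    qed
    moreover have "s (X + t *\<^sub>R V) \<le> s X - t * s X + t * s (X + V)"
    proof -
      have "(1 - t) *\<^sub>R X + t *\<^sub>R (X + V) = X + t *\<^sub>R V" by (simp add: algebra_simps)
      thus ?thesis using convex_onD[OF s_convex, of t X "X + V"] t by (simp add: left_diff_distrib)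
    qed
    moreover have "\<bar>smooth_part c (R X (t *\<^sub>R V)) - smooth_part c X - t * dg c X V\<bar> \<le> t * \<epsilon>"
    proof -
      have "\<bar>smooth_part c (R X (t *\<^sub>R V)) - smooth_part c (R X 0)
          - t * dg c (R X 0) (retraction_velocity R X V 0)\<bar> \<le> t * \<epsilon>"
        using g_lin X V t by simp
      thus ?thesis by (simp only: R0 vel0)
    qed
    moreover have "t * \<kappa> = t * \<epsilon> + \<bar>Ls\<bar> * (t * \<epsilon>)"
      unfolding \<epsilon>(2)[symmetric] by (simp add: algebra_simps)
    ultimately have "objective c (R X (t *\<^sub>R V))
        \<le> objective c X + t * dg c X V + t * s (X + V) - t * s X + t * \<kappa>"
      unfolding abs_le_iff by linarith
    thus ?thesis by (simp add: algebra_simps)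
  qed
  moreover have "0 < min (min \<delta>1 \<delta>2) 1" using \<open>\<delta>1 > 0\<close> \<open>\<delta>2 > 0\<close> by simp
  ultimately show ?thesis using that[of "min (min \<delta>1 \<delta>2) 1"] by simp
qed

lemma armijo_holds_for_short_steps:
  assumes c: "c > 0"
  obtains \<delta> where "0 < \<delta>" "\<delta> \<le> 1"
    "\<And>X V t. X \<in> stiefel \<Longrightarrow> V \<in> tangent_space X \<Longrightarrow> norm V \<le> B \<Longrightarrow> c\<^sup>2 < norm V \<Longrightarrow>
       dg c X V + s (X + V) - s X \<le> -(3/4) * ((norm V)\<^sup>2 / c) \<Longrightarrow> 0 \<le> t \<Longrightarrow> t \<le> \<delta> \<Longrightarrow>
       objective c (R X (t *\<^sub>R V)) \<le> objective c X - t / (2*c) * (norm V)\<^sup>2"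
proof -
  obtain \<delta> where \<delta>: "0 < \<delta>" "\<delta> \<le> 1" and first_order: "\<And>X V t. X \<in> stiefel \<Longrightarrow> V \<in> tangent_space X \<Longrightarrow>
      norm V \<le> B \<Longrightarrow> 0 \<le> t \<Longrightarrow> t \<le> \<delta> \<Longrightarrow>
      objective c (R X (t *\<^sub>R V)) \<le> objective c X + t * (dg c X V + s (X + V) - s X) + t * (c^3/4)"
    using objective_first_order_bound[OF c, of "c^3/4" B] c by auto
  have "objective c (R X (t *\<^sub>R V)) \<le> objective c X - t / (2*c) * (norm V)\<^sup>2"
    if X: "X \<in> stiefel" and V: "V \<in> tangent_space X" "norm V \<le> B" "c\<^sup>2 < norm V"
      and descent: "dg c X V + s (X + V) - s X \<le> -(3/4) * ((norm V)\<^sup>2 / c)"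
      and t: "0 \<le> t" "t \<le> \<delta>" for X V t
  proof -
    (* Since ||V|| > c^2, the error t c^3/4 is at most a third of the model decrease. *)
    have "(c\<^sup>2)\<^sup>2 \<le> (norm V)\<^sup>2" using V(3) c by (intro power_mono) auto
    hence "c^3 \<le> (norm V)\<^sup>2 / c" using c by (simp add: field_simps power2_eq_square power3_eq_cube)
    hence "t * (c^3/4) \<le> t * ((1/4) * ((norm V)\<^sup>2 / c))" using t by (intro mult_left_mono) auto
    moreover have "t * (dg c X V + s (X + V) - s X) \<le> t * (-(3/4) * ((norm V)\<^sup>2 / c))"
      using descent t by (intro mult_left_mono) auto
    moreover have "t / (2*c) * (norm V)\<^sup>2 = t * ((1/2) * ((norm V)\<^sup>2 / c))" by simp
    ultimately show ?thesis using first_order[OF X V(1,2) t] by (simp add: algebra_simps)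
  qed
  thus ?thesis using that \<delta> by blast
qed

lemma accepted_steps_not_bounded_below:
  fixes X V :: "nat \<Rightarrow> real^'r^'d" and m :: "nat \<Rightarrow> nat"
  assumes c: "c > 0" and \<eta>: "\<eta> > 0"
    and X_st: "\<And>k. X k \<in> stiefel"
    and ls_ok: "\<And>k. k \<ge> N \<Longrightarrow> objective c (R (X k) (\<beta> ^ m k *\<^sub>R V k))
                   \<le> objective c (X k) - \<beta> ^ m k / (2 * c) * (norm (V k))\<^sup>2"
    and X_next: "\<And>k. X (Suc k) = R (X k) (\<beta> ^ m k *\<^sub>R V k)"
    and large: "\<And>k. k \<ge> N \<Longrightarrow> c\<^sup>2 < norm (V k)"
  shows "\<exists>k\<ge>N. \<beta> ^ m k < \<eta>"
proof (rule ccontr)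
  assume "\<not> ?thesis"
  hence long: "\<eta> \<le> \<beta> ^ m k" if "k \<ge> N" for k using that by (simp add: not_less)
  obtain L where L: "\<And>Y. Y \<in> stiefel \<Longrightarrow> L \<le> objective c Y"
    using objective_bounded_below[OF c] by blast
  define d where "d = \<eta> / (2*c) * (c\<^sup>2)\<^sup>2"
  have "d > 0" using \<eta> c by (simp add: d_def)
  have decrease: "objective c (X (Suc k)) \<le> objective c (X k) - d" if k: "k \<ge> N" for k
  proof -
    have "(c\<^sup>2)\<^sup>2 \<le> (norm (V k))\<^sup>2" using large[OF k] c by (intro power_mono) auto
    hence "d \<le> \<beta> ^ m k / (2*c) * (norm (V k))\<^sup>2"
      unfolding d_def using long[OF k] \<eta> c by (intro mult_mono divide_right_mono) auto
    thus ?thesis using ls_ok[OF k] by (simp add: X_next)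
  qed
  obtain k where "k \<ge> N" "objective c (X k) - d < objective c (X (Suc k))"
    using bounded_below_no_uniform_decrease[where F="\<lambda>k. objective c (X k)", OF \<open>d > 0\<close> L[OF X_st]]
    by blast
  thus False using decrease by force
qed

lemma stalled_parameter_impossible:
  fixes X V :: "nat \<Rightarrow> real^'r^'d" and \<mu> :: "nat \<Rightarrow> real" and m :: "nat \<Rightarrow> nat"
  assumes c: "c > 0" and beta: "0 < \<beta>" "\<beta> < 1"
    and X_st: "\<And>k. X k \<in> stiefel"
    and V_tan: "\<And>k. V k \<in> tangent_space (X k)"
    and V_min: "\<And>k W. W \<in> tangent_space (X k) \<Longrightarrow>
         egrad (smooth_part (\<mu> k)) (X k) \<bullet> V k + (1 / (2 * \<mu> k)) * (norm (V k))\<^sup>2 + s (X k + V k)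
       \<le> egrad (smooth_part (\<mu> k)) (X k) \<bullet> W + (1 / (2 * \<mu> k)) * (norm W)\<^sup>2 + s (X k + W)"
    and ls_ok: "\<And>k. objective (\<mu> k) (R (X k) (\<beta> ^ m k *\<^sub>R V k))
                   \<le> objective (\<mu> k) (X k) - \<beta> ^ m k / (2 * \<mu> k) * (norm (V k))\<^sup>2"
    and ls_least: "\<And>k j. j < m k \<Longrightarrow> \<not> (objective (\<mu> k) (R (X k) (\<beta> ^ j *\<^sub>R V k))
                   \<le> objective (\<mu> k) (X k) - \<beta> ^ j / (2 * \<mu> k) * (norm (V k))\<^sup>2)"
    and X_next: "\<And>k. X (Suc k) = R (X k) (\<beta> ^ m k *\<^sub>R V k)"
    and stalled: "\<And>k. k \<ge> N \<Longrightarrow> \<mu> k = c \<and> c\<^sup>2 < norm (V k)"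
  shows False
proof -
  obtain M where M: "0 \<le> M" "\<And>Y W. Y \<in> stiefel \<Longrightarrow> \<bar>dg c Y W\<bar> \<le> M * norm W"
    using dg_bounded[OF c] by blast
  define B where "B = 2*c*(M + \<bar>Ls\<bar>)"
  have model: "dg c (X k) (V k) + 1/(2*c) * (norm (V k))\<^sup>2 + s (X k + V k)
      \<le> dg c (X k) W + 1/(2*c) * (norm W)\<^sup>2 + s (X k + W)" if "k \<ge> N" "W \<in> tangent_space (X k)" for k W
    using V_min[OF that(2)] stalled[OF that(1)] by (simp add: egrad_smooth_part[OF c])
  have V_bound: "norm (V k) \<le> B" if k: "k \<ge> N" for k
    unfolding B_def
  proof (rule prox_step_norm_le[OF c M(1) abs_ge_zero])
    show "dg c (X k) (V k) + 1/(2*c) * (norm (V k))\<^sup>2 + s (X k + V k) \<le> s (X k)"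
      using model[OF k zero_in_tangent_space] by (simp add: linear_0[OF linear_dg[OF c]])
    show "\<bar>dg c (X k) (V k)\<bar> \<le> M * norm (V k)" using M(2)[OF X_st] .
    have "Ls * norm (V k) \<le> \<bar>Ls\<bar> * norm (V k)" by (intro mult_right_mono) auto
    thus "s (X k) - s (X k + V k) \<le> \<bar>Ls\<bar> * norm (V k)"
      using s_lip[of "X k" "X k + V k"] by (simp add: abs_le_iff)
  qed
  have descent: "dg c (X k) (V k) + s (X k + V k) - s (X k) \<le> -(3/4) * ((norm (V k))\<^sup>2 / c)"
    if "k \<ge> N" for k
    by (rule prox_step_model_decrease[OF c linear_dg[OF c] s_convex model[OF that tangent_space_scaleR[OF V_tan]]])
  obtain \<delta> where \<delta>: "0 < \<delta>" "\<delta> \<le> 1" and armijo: "\<And>k t. k \<ge> N \<Longrightarrow> 0 \<le> t \<Longrightarrow> t \<le> \<delta> \<Longrightarrow>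
      objective c (R (X k) (t *\<^sub>R V k)) \<le> objective c (X k) - t / (2*c) * (norm (V k))\<^sup>2"
    using armijo_holds_for_short_steps[OF c, of B] X_st V_tan V_bound stalled descent by metis
  have "\<beta> * \<delta> > 0" using beta \<delta> by simp
  moreover have "objective c (R (X k) (\<beta> ^ m k *\<^sub>R V k))
      \<le> objective c (X k) - \<beta> ^ m k / (2 * c) * (norm (V k))\<^sup>2" if "k \<ge> N" for k
    using ls_ok[of k] stalled[OF that] by simp
  moreover have "c\<^sup>2 < norm (V k)" if "k \<ge> N" for k using stalled[OF that] by simp
  ultimately obtain k where k: "k \<ge> N" and short: "\<beta> ^ m k < \<beta> * \<delta>"
    using accepted_steps_not_bounded_below[where X=X and V=V and m=m and N=N, OF c _ X_st _ X_next] by blast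
  (* The last rejected trial step beta^(m k - 1) is at most delta, so it passes the Armijo test. *)
  have "\<beta> * \<delta> \<le> 1" using beta \<delta> by (simp add: mult_le_one)
  hence m_pos: "m k = Suc (m k - 1)" using short by (cases "m k") auto
  define t where "t = \<beta> ^ (m k - 1)"
  have "\<beta> * t < \<beta> * \<delta>" using short m_pos by (metis power_Suc t_def)
  hence "t \<le> \<delta>" using beta by simp
  moreover have "0 \<le> t" using beta by (simp add: t_def)
  ultimately show False
    using ls_least[of "m k - 1" k] stalled[OF k] armijo[OF k] m_pos by (simp add: t_def)
qed

end

theorem mainTheorem11:
  fixes u s :: "real^'r^'d \<Rightarrow> real"
    and gu :: "real^'r^'d \<Rightarrow> real^'r^'d"
    and Sigma S :: "real^'d^'d"
    and R :: "real^'r^'d \<Rightarrow> real^'r^'d \<Rightarrow> real^'r^'d"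
    and Lu Ls \<rho> \<theta> \<beta> :: real
    and X V :: "nat \<Rightarrow> real^'r^'d"
    and \<mu> \<alpha> :: "nat \<Rightarrow> real"
    and m :: "nat \<Rightarrow> nat"
  defines "gt \<equiv> (\<lambda>Y t. u Y + wsmooth \<rho> S Y t)"
    and "ft \<equiv> (\<lambda>Y t. u Y + wsmooth \<rho> S Y t + s Y)"
  assumes dims: "CARD('r) < CARD('d)"
    and u_grad: "\<And>Y. (u has_derivative (\<lambda>H. gu Y \<bullet> H)) (at Y)"
    and u_lip: "\<And>Y Z. norm (gu Y - gu Z) \<le> Lu * norm (Y - Z)"
    and s_convex: "convex_on UNIV s"
    and s_lip: "\<And>Y Z. \<bar>s Y - s Z\<bar> \<le> Ls * norm (Y - Z)"
    and Sigma_psd: "psd Sigma"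
    and S_sqrt: "psd S" "S ** S = Sigma"
    and rho_pos: "\<rho> > 0"
    and retr: "is_retraction R"
    and X0: "X 0 \<in> stiefel"
    and mu0: "\<mu> 0 > 0"
    and theta: "0 < \<theta>" "\<theta> < 1"
    and beta: "0 < \<beta>" "\<beta> < 1"
    and V_tan: "\<And>k. V k \<in> tangent_space (X k)"
    and V_min: "\<And>k W. W \<in> tangent_space (X k) \<Longrightarrow>
         egrad (\<lambda>Y. gt Y (\<mu> k)) (X k) \<bullet> V k + (1 / (2 * \<mu> k)) * (norm (V k))\<^sup>2 + s (X k + V k)
       \<le> egrad (\<lambda>Y. gt Y (\<mu> k)) (X k) \<bullet> W + (1 / (2 * \<mu> k)) * (norm W)\<^sup>2 + s (X k + W)"
    and ls_ok: "\<And>k. ft (R (X k) (\<beta> ^ m k *\<^sub>R V k)) (\<mu> k)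
                   \<le> ft (X k) (\<mu> k) - \<beta> ^ m k / (2 * \<mu> k) * (norm (V k))\<^sup>2"
    and ls_least: "\<And>k j. j < m k \<Longrightarrow> \<not> (ft (R (X k) (\<beta> ^ j *\<^sub>R V k)) (\<mu> k)
                   \<le> ft (X k) (\<mu> k) - \<beta> ^ j / (2 * \<mu> k) * (norm (V k))\<^sup>2)"
    and alpha: "\<And>k. \<alpha> k = \<beta> ^ m k"
    and X_next: "\<And>k. X (Suc k) = R (X k) (\<alpha> k *\<^sub>R V k)"
    and mu_next: "\<And>k. \<mu> (Suc k) = (if norm (V k) > (\<mu> k)\<^sup>2 then \<mu> k else \<theta> * \<mu> k)"
  shows "infinite {k. norm (V k) \<le> (\<mu> k)\<^sup>2} \<and> decseq \<mu> \<and> \<mu> \<longlonglongrightarrow> 0"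
proof -
  interpret smpg_problem u s gu Ls \<rho> S R
  proof
    show "continuous_on UNIV gu" using u_lip by (rule continuous_on_Lipschitz_bound)
  qed (use u_grad s_convex s_lip rho_pos retr in auto)
  let ?P = "\<lambda>k. (\<mu> k)\<^sup>2 < norm (V k)"
  have mu_step: "\<mu> (Suc k) = (if ?P k then \<mu> k else \<theta> * \<mu> k)" for k by (rule mu_next)
  have mu_pos: "\<mu> k > 0" for k
    by (rule reduction_schedule_pos[where P="?P", OF mu_step mu0 theta(1)])
  have X_st: "X k \<in> stiefel" for k
    by (rule retraction_iterates_in_stiefel[OF retr X0 V_tan X_next])
  have "infinite {k. \<not> ?P k}"
  proof
    assume "finite {k. \<not> ?P k}"
    then obtain N where N: "\<And>k. k \<ge> N \<Longrightarrow> \<mu> k = \<mu> N \<and> ?P k"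
      using reduction_schedule_eventually_const[where P="?P", OF mu_step] by blast
    hence stalled: "\<mu> k = \<mu> N \<and> (\<mu> N)\<^sup>2 < norm (V k)" if "k \<ge> N" for k
      using that by metis
    show False
      by (rule stalled_parameter_impossible[where X=X and V=V and \<mu>=\<mu> and m=m and N=N,
            OF mu_pos[of N] beta X_st V_tan V_min[unfolded gt_def]
            ls_ok[unfolded ft_def] ls_least[unfolded ft_def] X_next[unfolded alpha] stalled])
  qed
  moreover have "{k. norm (V k) \<le> (\<mu> k)\<^sup>2} = {k. \<not> ?P k}" by (auto simp: not_less)
  ultimately show ?thesis
    using reduction_schedule_tendsto_zero[where P="?P", OF mu_step mu_pos theta(2)] by simp
qed

end
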